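(* Let $m\ge 2$ be even, $n\ge 2$, and let $\mathcal{A}$ be a completely positive tensor of order $m$ and dimension $n$. Then $\mathcal{A}$ is positive definite if and only if $\mathcal{A}$ is strongly completely positive.
   Context: For a vector $\mathbf{u}\in\mathbb{R}^n$, $\mathbf{u}^m$ denotes the symmetric $m$th order $n$-dimensional tensor with entries $u_{i_1}\cdots u_{i_m}$. A symmetric $m$th order $n$-dimensional tensor $\mathcal{A}$ is completely positive if there are nonnegative vectors $\mathbf{u}^{(1)},\dots,\mathbf{u}^{(r)}\in\mathbb{R}^n$ with $\mathcal{A}=(\mathbf{u}^{(1)})^m+\dots+(\mathbf{u}^{(r)})^m$; it is strongly completely positive if such a decomposition exists with $\{\mathbf{u}^{(1)},\dots,\mathbf{u}^{(r)}\}$ spanning $\mathbb{R}^n$. For $m$ even, $\mathcal{A}$ is positive definite if $\mathcal{A}\mathbf{x}^m=\sum_{i_1,\dots,i_m}a_{i_1\dots i_m}x_{i_1}\cdots x_{i_m}>0$ for all nonzero $\mathbf{x}\in\mathbb{R}^n$. *)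

theory Defs
  imports "HOL-Analysis.Analysis"
begin

text \<open>Tensors of order m and dimension n = CARD('n): functions on index lists
  (i_1,...,i_m) of length m with entries in the index type 'n. Values on lists of
  other lengths are irrelevant.\<close>

type_synonym 'n tensor = "'n list \<Rightarrow> real"

definition idx :: "nat \<Rightarrow> 'n list set" where
  "idx m = {is. length is = m}"

definition symmetric_tensor :: "nat \<Rightarrow> 'n tensor \<Rightarrow> bool" where
  "symmetric_tensor m A \<longleftrightarrow>
     (\<forall>is\<in>idx m. \<forall>js\<in>idx m. mset is = mset js \<longrightarrow> A is = A js)"

definition tpow :: "(real^'n::finite) \<Rightarrow> 'n tensor" where
  "tpow u = (\<lambda>is. prod_list (map (\<lambda>i. u $ i) is))"

definition nonneg_vec :: "(real^'n::finite) \<Rightarrow> bool" where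
  "nonneg_vec u \<longleftrightarrow> (\<forall>i. 0 \<le> u $ i)"

definition cp_decomp :: "nat \<Rightarrow> 'n::finite tensor \<Rightarrow> (real^'n) list \<Rightarrow> bool" where
  "cp_decomp m A us \<longleftrightarrow> (\<forall>u\<in>set us. nonneg_vec u) \<and>
     (\<forall>is\<in>idx m. A is = (\<Sum>u\<leftarrow>us. tpow u is))"

definition completely_positive :: "nat \<Rightarrow> 'n::finite tensor \<Rightarrow> bool" where
  "completely_positive m A \<longleftrightarrow> symmetric_tensor m A \<and> (\<exists>us. cp_decomp m A us)"

definition strongly_completely_positive :: "nat \<Rightarrow> 'n::finite tensor \<Rightarrow> bool" where
  "strongly_completely_positive m A \<longleftrightarrow> symmetric_tensor m A \<and>
     (\<exists>us. cp_decomp m A us \<and> span (set us) = UNIV)"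

definition tensor_form :: "nat \<Rightarrow> 'n::finite tensor \<Rightarrow> real^'n \<Rightarrow> real" where
  "tensor_form m A x = (\<Sum>is\<in>idx m. A is * prod_list (map (\<lambda>i. x $ i) is))"

definition positive_definite :: "nat \<Rightarrow> 'n::finite tensor \<Rightarrow> bool" where
  "positive_definite m A \<longleftrightarrow> (\<forall>x. x \<noteq> 0 \<longrightarrow> tensor_form m A x > 0)"

end

theory Submission
  imports Defs
begin

text \<open>A decomposition \<open>A = (\<Sum>k. u\<^sub>k\<^sup>m)\<close> turns the form into \<open>A x\<^sup>m = (\<Sum>k. (u\<^sub>k \<bullet> x)\<^sup>m)\<close>,
  a sum of even powers. It vanishes exactly when \<open>x\<close> is orthogonal to every \<open>u\<^sub>k\<close>, so \<open>A\<close>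
  is positive definite iff the \<open>u\<^sub>k\<close> have trivial orthogonal complement, i.e. span \<open>\<real>\<^sup>n\<close>.
  Hence positive definiteness makes \<^emph>\<open>every\<close> decomposition spanning.\<close>

lemma idx_Suc: "idx (Suc m) = (\<lambda>(i, is). i # is) ` (UNIV \<times> idx m)"
  by (auto simp: idx_def image_iff length_Suc_conv)

lemma sum_idx_prod_list:
  fixes f :: "'n::finite \<Rightarrow> 'a::comm_semiring_1"
  shows "(\<Sum>is\<in>idx m. prod_list (map f is)) = (\<Sum>i\<in>UNIV. f i) ^ m"
proof (induction m)
  case 0
  have "idx 0 = {[] :: 'n list}"
    by (auto simp: idx_def)
  then show ?case
    by simp
next
  case (Suc m)
  have inj: "inj_on (\<lambda>(i, is). i # is) (UNIV \<times> (idx m :: 'n list set))"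
    by (auto simp: inj_on_def)
  have "(\<Sum>is\<in>idx (Suc m). prod_list (map f is))
      = (\<Sum>i\<in>UNIV. \<Sum>is\<in>idx m. f i * prod_list (map f is))"
    unfolding idx_Suc sum.reindex[OF inj] sum.cartesian_product by (simp add: case_prod_beta)
  also have "\<dots> = (\<Sum>i\<in>UNIV. f i) ^ Suc m"
    by (simp add: Suc sum_distrib_right flip: sum_distrib_left)
  finally show ?case .
qed

lemma tensor_form_tpow: "tensor_form m (tpow u) x = (u \<bullet> x) ^ m"
proof -
  have "tpow u is * prod_list (map (\<lambda>i. x $ i) is) = prod_list (map (\<lambda>i. u $ i * x $ i) is)"
    for "is"
    by (induction "is") (simp_all add: tpow_def algebra_simps)
  then show ?thesis
    by (simp add: tensor_form_def sum_idx_prod_list inner_vec_def)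
qed

lemma tensor_form_cp_decomp:
  assumes "cp_decomp m A us"
  shows "tensor_form m A x = (\<Sum>u\<leftarrow>us. (u \<bullet> x) ^ m)"
proof -
  have "tensor_form m A x = (\<Sum>is\<in>idx m. \<Sum>u\<leftarrow>us. tpow u is * prod_list (map (\<lambda>i. x $ i) is))"
    using assms by (auto simp: tensor_form_def cp_decomp_def sum_list_mult_const intro!: sum.cong)
  also have "\<dots> = (\<Sum>u\<leftarrow>us. tensor_form m (tpow u) x)"
    by (induction us) (simp_all add: tensor_form_def sum.distrib)
  finally show ?thesis
    by (simp add: tensor_form_tpow)
qed

lemma sum_list_even_power_nonneg:
  fixes f :: "'b \<Rightarrow> 'a::linordered_idom"
  assumes "even m"
  shows "0 \<le> (\<Sum>u\<leftarrow>us. f u ^ m)"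
  using assms by (intro sum_list_nonneg) (auto simp: zero_le_even_power)

lemma sum_list_even_power_eq_0_iff:
  fixes f :: "'b \<Rightarrow> 'a::linordered_idom"
  assumes "even m" and "m > 0"
  shows "(\<Sum>u\<leftarrow>us. f u ^ m) = 0 \<longleftrightarrow> (\<forall>u\<in>set us. f u = 0)"
  using assms by (subst sum_list_nonneg_eq_0_iff) (auto simp: zero_le_even_power)

lemma span_eq_UNIV_iff_orthogonal:
  fixes S :: "'a::euclidean_space set"
  shows "span S = UNIV \<longleftrightarrow> (\<forall>x. (\<forall>u\<in>S. orthogonal u x) \<longrightarrow> x = 0)"
proof
  assume "span S = UNIV"
  then show "\<forall>x. (\<forall>u\<in>S. orthogonal u x) \<longrightarrow> x = 0"
    by (metis UNIV_I orthogonal_commute orthogonal_self orthogonal_to_span)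
next
  assume trivial_complement: "\<forall>x. (\<forall>u\<in>S. orthogonal u x) \<longrightarrow> x = 0"
  show "span S = UNIV"
  proof (rule ccontr)
    assume "span S \<noteq> UNIV"
    then have "span S \<subset> span UNIV"
      by auto
    then obtain x where "x \<noteq> 0" and "\<And>y. y \<in> span S \<Longrightarrow> orthogonal x y"
      by (rule orthogonal_to_subspace_exists_gen) blast+
    with trivial_complement show False
      by (meson orthogonal_commute span_base)
  qed
qed

lemma positive_definite_iff_span_cp_decomp:
  assumes "even m" and "m > 0" and "cp_decomp m A us"
  shows "positive_definite m A \<longleftrightarrow> span (set us) = UNIV"
proof -
  have "positive_definite m A \<longleftrightarrow> (\<forall>x. tensor_form m A x = 0 \<longrightarrow> x = 0)"
    using sum_list_even_power_nonneg[OF \<open>even m\<close>]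
    by (auto simp: positive_definite_def tensor_form_cp_decomp[OF assms(3)] order_less_le)
  also have "\<dots> \<longleftrightarrow> (\<forall>x. (\<forall>u\<in>set us. orthogonal u x) \<longrightarrow> x = 0)"
    by (simp add: tensor_form_cp_decomp[OF assms(3)] sum_list_even_power_eq_0_iff[OF assms(1,2)]
        orthogonal_def)
  finally show ?thesis
    by (simp add: span_eq_UNIV_iff_orthogonal)
qed

theorem theorem2p2:
  fixes A :: "'n::finite tensor" and m :: nat
  assumes "even m" and "m \<ge> 2" and "CARD('n) \<ge> 2"
    and "completely_positive m A"
  shows "positive_definite m A \<longleftrightarrow> strongly_completely_positive m A"
proof -
  have "m > 0"
    using \<open>m \<ge> 2\<close> by simp
  obtain us where "symmetric_tensor m A" and "cp_decomp m A us"
    using \<open>completely_positive m A\<close> by (auto simp: completely_positive_def)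
  show ?thesis
    using positive_definite_iff_span_cp_decomp[OF \<open>even m\<close> \<open>m > 0\<close>]
      \<open>symmetric_tensor m A\<close> \<open>cp_decomp m A us\<close>
    by (auto simp: strongly_completely_positive_def)
qed

end
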